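(* Let $e_1,e_2,e_3$ be nonzero integers with $e_1+e_2+e_3=0$, $2\,\|\,e_1$, $2\,\|\,e_2$, $4\mid e_3$. Let $n$ be an odd positive square-free integer and $\Lambda=(d_1,d_2,d_3)$ with $d_1,d_2,d_3$ odd square-free divisors of $e_1e_2e_3n$ and $d_1d_2d_3$ a square. If $D^{(n)}_\Lambda(\mathbb{Q}_2)\ne\emptyset$, then $d_3\equiv 1\pmod 4$.
   Context: $D^{(n)}_\Lambda\subset\mathbb{P}^3$ (coordinates $(t,u_1,u_2,u_3)$) is defined by $e_1nt^2+d_2u_2^2-d_3u_3^2=0$, $e_2nt^2+d_3u_3^2-d_1u_1^2=0$, $e_3nt^2+d_1u_1^2-d_2u_2^2=0$. $2\,\|\,m$ means $2\mid m$, $4\nmid m$. *)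

theory Defs
  imports "HOL-Computational_Algebra.Computational_Algebra" "HOL-Number_Theory.Number_Theory"
begin

text \<open>p-adic integers as the inverse limit of Z/p^k: a compatible sequence of residues
  x k in {0..<p^k}.\<close>
definition padic_int :: "int \<Rightarrow> (nat \<Rightarrow> int) \<Rightarrow> bool" where
  "padic_int p x \<longleftrightarrow> (\<forall>k. 0 \<le> x k \<and> x k < p ^ k) \<and> (\<forall>k. x (Suc k) mod p ^ k = x k)"

definition D_eqs :: "int \<Rightarrow> int \<Rightarrow> int \<Rightarrow> int \<Rightarrow> int \<Rightarrow> int \<Rightarrow>
                     int \<Rightarrow> int \<Rightarrow> int \<Rightarrow> int \<Rightarrow> int \<Rightarrow> int \<Rightarrow> bool" where
  "D_eqs m e1 e2 e3 n d1 d2 d3 t u1 u2 u3 \<longleftrightarrow>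
     [e1 * n * t^2 + d2 * u2^2 - d3 * u3^2 = 0] (mod m) \<and>
     [e2 * n * t^2 + d3 * u3^2 - d1 * u1^2 = 0] (mod m) \<and>
     [e3 * n * t^2 + d1 * u1^2 - d2 * u2^2 = 0] (mod m)"

text \<open>D^(n)_Lambda(Q_p) is nonempty: since the equations are homogeneous, a Q_p-point of P^3
  is the same as a nonzero solution (t,u1,u2,u3) in Z_p^4 (clear denominators).\<close>
definition D_Qp_nonempty :: "int \<Rightarrow> int \<Rightarrow> int \<Rightarrow> int \<Rightarrow> int \<Rightarrow> int \<Rightarrow> int \<Rightarrow> int \<Rightarrow> bool" where
  "D_Qp_nonempty p e1 e2 e3 n d1 d2 d3 \<longleftrightarrow>
     (\<exists>t u1 u2 u3. padic_int p t \<and> padic_int p u1 \<and> padic_int p u2 \<and> padic_int p u3 \<and>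
        (\<exists>k. t k \<noteq> 0 \<or> u1 k \<noteq> 0 \<or> u2 k \<noteq> 0 \<or> u3 k \<noteq> 0) \<and>
        (\<forall>k. D_eqs (p ^ k) e1 e2 e3 n d1 d2 d3 (t k) (u1 k) (u2 k) (u3 k)))"

end

theory Submission
  imports Defs
begin

text \<open>Dividing a nonzero 2-adic solution by the largest common power of 2 gives integers
  t, u1, u2, u3, not all even, satisfying the equations modulo 4. Modulo 2 the first two
  equations force u1, u2, u3 to have the same parity. They cannot all be even: then t is odd
  and the first equation reads 2 = 0 modulo 4. So all u_i are odd, their squares are 1 modulo 4,
  and the third equation gives d1 = d2 modulo 4. Finally d3 = d1^2 d3 = d1 d2 d3 is an odd
  square, hence 1 modulo 4.\<close>

lemma padic_int_base_pos:
  assumes "padic_int p x"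
  shows "p > 0"
proof -
  have "0 \<le> x 1" "x 1 < p ^ 1"
    using assms unfolding padic_int_def by blast+
  then show ?thesis
    by simp
qed

lemma padic_int_0:
  assumes "padic_int p x"
  shows "x 0 = 0"
proof -
  have "0 \<le> x 0" "x 0 < p ^ 0"
    using assms unfolding padic_int_def by blast+
  then show ?thesis
    by simp
qed

lemma padic_int_mod_pow:
  assumes "padic_int p x"
  shows "x (k + m) mod p ^ k = x k"
proof (induction m)
  case 0
  show ?case
    using assms unfolding padic_int_def by simp
next
  case (Suc m)
  have "x (k + Suc m) mod p ^ k = x (Suc (k + m)) mod p ^ (k + m) mod p ^ k"
    by (simp add: le_imp_power_dvd mod_mod_cancel)
  also have "\<dots> = x (k + m) mod p ^ k"
    using assms unfolding padic_int_def by simp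
  finally show ?case
    using Suc by simp
qed

lemma padic_int_pow_dvd_iff:
  assumes "padic_int p x" "k \<le> l"
  shows "p ^ k dvd x l \<longleftrightarrow> x k = 0"
  using padic_int_mod_pow[OF assms(1), of k "l - k"] assms(2)
  by (simp add: dvd_eq_mod_eq_0)

lemma padic_int_divide_pow:
  assumes "padic_int p x" "x v = 0" "v < l"
  obtains y where "x l = p ^ v * y" "p dvd y \<longleftrightarrow> x (Suc v) = 0"
proof -
  have "p ^ v dvd x l"
    using assms by (simp add: padic_int_pow_dvd_iff)
  then obtain y where y: "x l = p ^ v * y" ..
  have "p dvd y \<longleftrightarrow> p ^ Suc v dvd x l"
    using padic_int_base_pos[OF assms(1)] by (simp add: y power_Suc2)
  also have "\<dots> \<longleftrightarrow> x (Suc v) = 0"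
    using assms(3) by (intro padic_int_pow_dvd_iff[OF assms(1)]) simp
  finally show ?thesis
    using that y by blast
qed

lemma D_eqs_scale:
  fixes c :: int
  assumes "c \<noteq> 0"
  shows "D_eqs (c\<^sup>2 * m) e1 e2 e3 n d1 d2 d3 (c * t) (c * u1) (c * u2) (c * u3) \<longleftrightarrow>
         D_eqs m e1 e2 e3 n d1 d2 d3 t u1 u2 u3"
proof -
  have scale: "[a * (c * x)\<^sup>2 + b * (c * y)\<^sup>2 - d * (c * z)\<^sup>2 = 0] (mod c\<^sup>2 * m) \<longleftrightarrow>
      [a * x\<^sup>2 + b * y\<^sup>2 - d * z\<^sup>2 = 0] (mod m)" for a b d x y z :: int
  proof -
    have "a * (c * x)\<^sup>2 + b * (c * y)\<^sup>2 - d * (c * z)\<^sup>2 = c\<^sup>2 * (a * x\<^sup>2 + b * y\<^sup>2 - d * z\<^sup>2)"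
      by (simp add: algebra_simps power_mult_distrib)
    then show ?thesis
      using assms by (simp add: cong_0_iff)
  qed
  show ?thesis
    unfolding D_eqs_def scale ..
qed

lemma D_Qp_nonempty_primitive_solution:
  assumes "D_Qp_nonempty p e1 e2 e3 n d1 d2 d3" "k > 0"
  obtains t u1 u2 u3 where "D_eqs (p ^ k) e1 e2 e3 n d1 d2 d3 t u1 u2 u3"
    "\<not> p dvd t \<or> \<not> p dvd u1 \<or> \<not> p dvd u2 \<or> \<not> p dvd u3"
proof -
  obtain x0 x1 x2 x3 where x: "padic_int p x0" "padic_int p x1" "padic_int p x2" "padic_int p x3"
    and nonzero: "\<exists>j. x0 j \<noteq> 0 \<or> x1 j \<noteq> 0 \<or> x2 j \<noteq> 0 \<or> x3 j \<noteq> 0"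
    and sol: "\<And>j. D_eqs (p ^ j) e1 e2 e3 n d1 d2 d3 (x0 j) (x1 j) (x2 j) (x3 j)"
    using assms(1) unfolding D_Qp_nonempty_def by blast
  define P where "P j \<longleftrightarrow> x0 j \<noteq> 0 \<or> x1 j \<noteq> 0 \<or> x2 j \<noteq> 0 \<or> x3 j \<noteq> 0" for j
  obtain j where "P j"
    using nonzero unfolding P_def by blast
  moreover have "\<not> P 0"
    using x by (simp add: P_def padic_int_0)
  ultimately obtain v where "\<not> P v" "P (Suc v)"
    using ex_least_nat_less[of P j] by blast
  then have zero: "x0 v = 0" "x1 v = 0" "x2 v = 0" "x3 v = 0"
    and nonzero_Suc: "x0 (Suc v) \<noteq> 0 \<or> x1 (Suc v) \<noteq> 0 \<or> x2 (Suc v) \<noteq> 0 \<or> x3 (Suc v) \<noteq> 0"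
    unfolding P_def by auto
  define l where "l = 2 * v + k"
  have "v < l"
    using assms(2) by (simp add: l_def)
  obtain t where t: "x0 l = p ^ v * t" "p dvd t \<longleftrightarrow> x0 (Suc v) = 0"
    using padic_int_divide_pow[OF x(1) zero(1) \<open>v < l\<close>] .
  obtain u1 where u1: "x1 l = p ^ v * u1" "p dvd u1 \<longleftrightarrow> x1 (Suc v) = 0"
    using padic_int_divide_pow[OF x(2) zero(2) \<open>v < l\<close>] .
  obtain u2 where u2: "x2 l = p ^ v * u2" "p dvd u2 \<longleftrightarrow> x2 (Suc v) = 0"
    using padic_int_divide_pow[OF x(3) zero(3) \<open>v < l\<close>] .
  obtain u3 where u3: "x3 l = p ^ v * u3" "p dvd u3 \<longleftrightarrow> x3 (Suc v) = 0"
    using padic_int_divide_pow[OF x(4) zero(4) \<open>v < l\<close>] .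
  have "p ^ l = (p ^ v)\<^sup>2 * p ^ k"
    by (simp add: l_def power_add power_mult[symmetric] mult.commute)
  then have "D_eqs ((p ^ v)\<^sup>2 * p ^ k) e1 e2 e3 n d1 d2 d3
      (p ^ v * t) (p ^ v * u1) (p ^ v * u2) (p ^ v * u3)"
    using sol[of l] by (simp only: t u1 u2 u3)
  moreover have "p ^ v \<noteq> 0"
    using padic_int_base_pos[OF x(1)] by simp
  ultimately have "D_eqs (p ^ k) e1 e2 e3 n d1 d2 d3 t u1 u2 u3"
    by (simp add: D_eqs_scale)
  then show ?thesis
    using that nonzero_Suc t(2) u1(2) u2(2) u3(2) by blast
qed

lemma odd_square_cong_1_mod_4:
  fixes x :: int
  assumes "odd x"
  shows "[x\<^sup>2 = 1] (mod 4)"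
proof -
  obtain a where "x = 2 * a + 1"
    using assms by (rule oddE)
  then have "x\<^sup>2 = 4 * (a\<^sup>2 + a) + 1"
    by (simp add: power2_eq_square algebra_simps)
  then show ?thesis
    by (simp add: cong_iff_dvd_diff)
qed

lemma even_square_dvd_4:
  fixes x :: int
  assumes "even x"
  shows "4 dvd x\<^sup>2"
  using assms by (auto simp: power2_eq_square)

lemma mult_odd_mod_4_eq_2:
  fixes e k :: int
  assumes "e mod 4 = 2" "odd k"
  shows "e * k mod 4 = 2"
proof -
  have "e * k mod 4 = 2 * k mod 4"
    using assms(1) by (metis mod_mult_left_eq)
  also have "\<dots> = 2"
    using assms(2) by presburger
  finally show ?thesis .
qed

lemma D_eqs_4_coords_odd:
  fixes e1 e2 e3 n d1 d2 d3 t u1 u2 u3 :: int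
  assumes sol: "D_eqs 4 e1 e2 e3 n d1 d2 d3 t u1 u2 u3"
    and "e1 mod 4 = 2" "even e2" "odd n" "odd d1" "odd d2" "odd d3"
    and primitive: "odd t \<or> odd u1 \<or> odd u2 \<or> odd u3"
  shows "odd u1 \<and> odd u2 \<and> odd u3"
proof -
  have eq1: "4 dvd e1 * n * t\<^sup>2 + d2 * u2\<^sup>2 - d3 * u3\<^sup>2"
    and eq2: "4 dvd e2 * n * t\<^sup>2 + d3 * u3\<^sup>2 - d1 * u1\<^sup>2"
    using sol unfolding D_eqs_def cong_0_iff by auto
  have "even e1"
    using \<open>e1 mod 4 = 2\<close> by presburger
  have "(2::int) dvd 4"
    by simp
  then have "2 dvd e1 * n * t\<^sup>2 + d2 * u2\<^sup>2 - d3 * u3\<^sup>2" "2 dvd e2 * n * t\<^sup>2 + d3 * u3\<^sup>2 - d1 * u1\<^sup>2"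
    using eq1 eq2 by (blast intro: dvd_trans)+
  then have parity: "even u2 \<longleftrightarrow> even u3" "even u3 \<longleftrightarrow> even u1"
    using \<open>even e1\<close> assms(3,5-7) by auto
  have "odd u3"
  proof
    assume "even u3"
    with parity primitive have "even u1" "even u2" "odd t"
      by auto
    have "4 dvd d2 * u2\<^sup>2 - d3 * u3\<^sup>2"
      using \<open>even u2\<close> \<open>even u3\<close> by (simp add: even_square_dvd_4)
    with eq1 have "4 dvd e1 * (n * t\<^sup>2)"
      by (simp add: dvd_add_left_iff mult.assoc add_diff_eq[symmetric])
    moreover have "odd (n * t\<^sup>2)"
      using \<open>odd n\<close> \<open>odd t\<close> by simp
    then have "e1 * (n * t\<^sup>2) mod 4 = 2"
      using \<open>e1 mod 4 = 2\<close> by (rule mult_odd_mod_4_eq_2[rotated])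
    ultimately show False
      by simp
  qed
  with parity show ?thesis
    by auto
qed

lemma D_eqs_4_cong_d1_d2:
  fixes e1 e2 e3 n d1 d2 d3 t u1 u2 u3 :: int
  assumes sol: "D_eqs 4 e1 e2 e3 n d1 d2 d3 t u1 u2 u3"
    and "4 dvd e3" "odd u1" "odd u2"
  shows "[d1 = d2] (mod 4)"
proof -
  have "[0 + d1 * 1 - d2 * 1 = e3 * n * t\<^sup>2 + d1 * u1\<^sup>2 - d2 * u2\<^sup>2] (mod 4)"
    using assms(2-4)
    by (intro cong_add cong_diff cong_mult cong_refl cong_sym[OF odd_square_cong_1_mod_4])
      (simp_all add: cong_def)
  also have "[e3 * n * t\<^sup>2 + d1 * u1\<^sup>2 - d2 * u2\<^sup>2 = 0] (mod 4)"
    using sol unfolding D_eqs_def by simp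
  finally show ?thesis
    by (simp add: cong_iff_dvd_diff cong_0_iff)
qed

lemma cong_1_mod_4_of_square_product:
  fixes d1 d2 d3 m :: int
  assumes "odd d1" "odd d2" "odd d3" "[d1 = d2] (mod 4)" "d1 * d2 * d3 = m\<^sup>2"
  shows "[d3 = 1] (mod 4)"
proof -
  have "[d3 = d1\<^sup>2 * d3] (mod 4)"
    using cong_scalar_right[OF odd_square_cong_1_mod_4[OF assms(1)], of d3]
    by (simp add: cong_sym)
  also have "[d1\<^sup>2 * d3 = d1 * d2 * d3] (mod 4)"
    using assms(4) by (simp add: power2_eq_square cong_mult)
  also have "d1 * d2 * d3 = m\<^sup>2"
    by (fact assms(5))
  also have "[m\<^sup>2 = 1] (mod 4)"
  proof (rule odd_square_cong_1_mod_4)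
    have "odd (m\<^sup>2)"
      using assms(1-3) by (simp flip: assms(5))
    then show "odd m"
      by simp
  qed
  finally show ?thesis .
qed

theorem lemma4p1:
  fixes e1 e2 e3 n d1 d2 d3 :: int
  assumes "e1 \<noteq> 0" "e2 \<noteq> 0" "e3 \<noteq> 0" "e1 + e2 + e3 = 0"
    and "2 dvd e1" "\<not> 4 dvd e1" "2 dvd e2" "\<not> 4 dvd e2" "4 dvd e3"
    and "n > 0" "odd n" "squarefree n"
    and "odd d1" "squarefree d1" "d1 dvd e1 * e2 * e3 * n"
    and "odd d2" "squarefree d2" "d2 dvd e1 * e2 * e3 * n"
    and "odd d3" "squarefree d3" "d3 dvd e1 * e2 * e3 * n"
    and "\<exists>m::int. d1 * d2 * d3 = m ^ 2"
    and "D_Qp_nonempty 2 e1 e2 e3 n d1 d2 d3"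
  shows "[d3 = 1] (mod 4)"
proof -
  obtain t u1 u2 u3 where sol: "D_eqs 4 e1 e2 e3 n d1 d2 d3 t u1 u2 u3"
    and primitive: "odd t \<or> odd u1 \<or> odd u2 \<or> odd u3"
    by (rule D_Qp_nonempty_primitive_solution[OF assms(23), of 2]) simp_all
  have "e1 mod 4 = 2"
    using assms(5,6) by presburger
  then have "odd u1 \<and> odd u2 \<and> odd u3"
    using D_eqs_4_coords_odd[OF sol _ _ _ _ _ _ primitive] assms(7,11,13,16,19) by blast
  then have "[d1 = d2] (mod 4)"
    using D_eqs_4_cong_d1_d2[OF sol assms(9)] by blast
  moreover obtain m where "d1 * d2 * d3 = m\<^sup>2"
    using assms(22) by blast
  ultimately show ?thesis
    by (rule cong_1_mod_4_of_square_product[OF assms(13,16,19)])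
qed

end
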